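(* With $B_n,P_n$ as in the context, let $L_n=|B_n|$, $m_n=|P_n|$, and $c_n$ the number of occurrences of the symbol $1$ in $B_n$. Then for all $n\ge1$, $m_n=L_n-2c_n$; equivalently, $m_n$ equals the number of occurrences of $3$ in $B_n$ minus the number of occurrences of $1$ in $B_n$.
   Context: Generation operator: for a finite vector $R=\langle r_1,\dots,r_m\rangle$ of positive integers and $s\in\{1,3\}$, $\mathcal{G}(R,s)= s^{r_1}\,(4-s)^{r_2}\,s^{r_3}\cdots$ (the $i$-th run consists of $r_i$ copies of $s$ if $i$ is odd and of $4-s$ if $i$ is even), of length $\sum_i r_i$. For a finite word $W$ over $\{1,3\}$, $R(W)$ denotes $W$ itself regarded as a vector of positive integers. Define $B_1=\mathcal{G}(\langle 1,3,3,3,1\rangle,1)=1\,3\,3\,3\,1\,1\,1\,3\,3\,3\,1$, $P_1=3$, and for $n\ge1$: $B_{n+1}=B_n\,P_n\,B_n$ (concatenation), $P_{n+1}=\mathcal{G}(R(P_n),3)$. *)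

theory Defs
  imports Main
begin

fun gen :: "nat list \<Rightarrow> nat \<Rightarrow> nat list" where
  "gen [] s = []"
| "gen (r # rs) s = replicate r s @ gen rs (4 - s)"

text \<open>P_n for n \<ge> 1 (the value at index 0 is an unused placeholder).\<close>
fun P :: "nat \<Rightarrow> nat list" where
  "P 0 = []"
| "P (Suc 0) = [3]"
| "P (Suc (Suc n)) = gen (P (Suc n)) 3"

text \<open>B_n for n \<ge> 1 (the value at index 0 is an unused placeholder).\<close>
fun B :: "nat \<Rightarrow> nat list" where
  "B 0 = []"
| "B (Suc 0) = gen [1,3,3,3,1] 1"
| "B (Suc (Suc n)) = B (Suc n) @ P (Suc n) @ B (Suc n)"

end

theory Submission
  imports Defs
begin

text \<open>Write \<open>d(W)\<close> for the number of 3s minus the number of 1s in a word \<open>W\<close> over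
  \<open>{1,3}\<close>. Since \<open>B\<^sub>n\<^sub>+\<^sub>1 = B\<^sub>n P\<^sub>n B\<^sub>n\<close>, induction gives
  \<open>d(B\<^sub>n\<^sub>+\<^sub>1) = 2 d(B\<^sub>n) + d(P\<^sub>n) = 2 |P\<^sub>n| + d(P\<^sub>n)\<close>, which is the sum of the
  entries of \<open>P\<^sub>n\<close>, i.e. \<open>|P\<^sub>n\<^sub>+\<^sub>1|\<close>, because the generation operator produces a
  word whose length is the sum of its run vector. The other identity is
  \<open>|B\<^sub>n| = c\<^sub>1 + c\<^sub>3\<close>.\<close>

lemma length_gen: "length (gen rs s) = sum_list rs"
  by (induction rs arbitrary: s) auto

lemma set_gen_subset: "s \<in> {1, 3} \<Longrightarrow> set (gen rs s) \<subseteq> {1, 3}"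
proof (induction rs arbitrary: s)
  case (Cons r rs)
  then have "4 - s \<in> {1, 3}" by auto
  with Cons show ?case by auto
qed simp

lemma set_P_subset: "set (P n) \<subseteq> {1, 3}"
  by (induction n rule: P.induct) (auto dest: set_gen_subset[of 3, simplified, THEN subsetD])

lemma set_B_subset: "set (B n) \<subseteq> {1, 3}"
  using set_P_subset by (induction n rule: B.induct) auto

lemma length_eq_count_list_sum:
  assumes "set xs \<subseteq> {a, b}" "a \<noteq> b"
  shows "length xs = count_list xs a + count_list xs b"
  using assms by (induction xs) auto

lemma sum_list_eq_count_list_sum:
  fixes a b :: nat
  assumes "set xs \<subseteq> {a, b}" "a \<noteq> b"
  shows "sum_list xs = a * count_list xs a + b * count_list xs b"
  using assms by (induction xs) auto

lemma length_P_eq_count_list_diff_B: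
  assumes "n \<ge> 1"
  shows "int (length (P n)) = int (count_list (B n) 3) - int (count_list (B n) 1)"
  using assms
proof (induction n rule: dec_induct)
  case base
  show ?case by (simp add: numeral_eq_Suc)
next
  case (step n)
  then obtain k where n: "n = Suc k" by (cases n) auto
  have "length (P (Suc n)) = sum_list (P n)"
    by (simp add: n length_gen)
  also have "\<dots> = count_list (P n) 1 + 3 * count_list (P n) 3"
    using sum_list_eq_count_list_sum[OF set_P_subset] by simp
  finally have "length (P (Suc n)) = count_list (P n) 1 + 3 * count_list (P n) 3" .
  moreover have "length (P n) = count_list (P n) 1 + count_list (P n) 3"
    using length_eq_count_list_sum[OF set_P_subset] by simp
  moreover have "B (Suc n) = B n @ P n @ B n"
    by (simp add: n)
  ultimately show ?case
    using step.IH by simp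
qed

theorem proposition5p1:
  fixes n :: nat
  assumes "n \<ge> 1"
  shows "int (length (P n)) = int (length (B n)) - 2 * int (count_list (B n) 1)
       \<and> int (length (P n)) = int (count_list (B n) 3) - int (count_list (B n) 1)"
proof -
  have "length (B n) = count_list (B n) 1 + count_list (B n) 3"
    using length_eq_count_list_sum[OF set_B_subset] by simp
  with length_P_eq_count_list_diff_B[OF assms] show ?thesis
    by simp
qed

end
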